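(* Let $q=p^e$ with $p$ prime, $e\ge1$, and $0\le s<e$. For $i=1,2$ let $C_i$ be an $[n,k_i,d_i]_q$ linear code over $\mathbb{F}_q$ with generator matrix $G_i$ and parity-check matrix $H_i$. Suppose $k_1+k_2\ge n$ and that either $$\mathrm{rk}\begin{pmatrix}G_1\\ H_2^{(p^{e-s})}\end{pmatrix}\le k_1\quad\text{or}\quad \mathrm{rk}\big(G_1(G_2^{(p^{e-s})})^T\big)=k_1-\dim_{\mathbb{F}_q}(C_1\cap C_2^{\perp_s})\le k_1+k_2-n.$$ Then there exists a quantum code with parameters $[[n,k_1+k_2-n,d]]_q$ with $d\ge\min\{d_1,d_2\}$.
   Context: For a matrix $A=(a_{ij})$ over $\mathbb{F}_q$, $A^{(p^{e-s})}=(a_{ij}^{p^{e-s}})$ (entrywise power), and $A^T$ is the transpose. For $\mathbf{x},\mathbf{y}\in\mathbb{F}_q^n$ the $s$-Galois form is $[\mathbf{x},\mathbf{y}]_s=\sum_{i=1}^n x_iy_i^{p^s}$; for a code $C$, $C^{\perp_s}=\{\mathbf{x}\in\mathbb{F}_q^n: [\mathbf{c},\mathbf{x}]_s=0\ \forall \mathbf{c}\in C\}$. Quantum codes: let $V_n=(\mathbb{C}^q)^{\otimes n}$ with orthonormal basis $\{|\mathbf{c}\rangle:\mathbf{c}\in\mathbb{F}_q^n\}$. For $a,b\in\mathbb{F}_q$ define $X(a)|x\rangle=|x+a\rangle$, $Z(b)|x\rangle=\omega^{\mathrm{tr}(bx)}|x\rangle$ with $\omega=e^{2\pi i/p}$ and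 $\mathrm{tr}:\mathbb{F}_q\to\mathbb{F}_p$ the trace; for $\mathbf{a},\mathbf{b}\in\mathbb{F}_q^n$ let $X(\mathbf{a})=\bigotimes_i X(a_i)$, $Z(\mathbf{b})=\bigotimes_i Z(b_i)$. The error group is $G_n=\{\omega^cX(\mathbf{a})Z(\mathbf{b})\}$, and the weight of $\omega^cX(\mathbf{a})Z(\mathbf{b})$ is the number of $i$ with $(a_i,b_i)\ne(0,0)$. A quantum code with parameters $[[n,k,d]]_q$ is a subspace $Q\subseteq V_n$ of dimension $q^k$ with minimum distance $d$: for all $|u\rangle,|v\rangle\in Q$ with $\langle u|v\rangle=0$ and every $E\in G_n$ of weight at most $d-1$, $\langle u|E|v\rangle=0$ (with the standard purity-based convention when $k=0$). *)

theory Defs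
  imports "Jordan_Normal_Form.DL_Rank" "HOL-Library.Function_Algebras" Complex_Main
begin

definition mat_rank :: "'a::field mat \<Rightarrow> nat" where
  "mat_rank A = vec_space.rank (dim_row A) A"

definition fdim :: "nat \<Rightarrow> 'a::field vec set \<Rightarrow> nat" where
  "fdim n S = vectorspace.dim class_ring ((module_vec TYPE('a) n)\<lparr>carrier := S\<rparr>)"

definition is_fsubspace :: "nat \<Rightarrow> 'a::field vec set \<Rightarrow> bool" where
  "is_fsubspace n S = subspace class_ring S (module_vec TYPE('a) n)"

definition hweight :: "'a::zero vec \<Rightarrow> nat" where
  "hweight x = card {i. i < dim_vec x \<and> x $ i \<noteq> 0}"

definition lin_code :: "nat \<Rightarrow> nat \<Rightarrow> nat \<Rightarrow> 'a::{finite,field} vec set \<Rightarrow> bool" where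
  "lin_code n k d C \<longleftrightarrow> is_fsubspace n C \<and> fdim n C = k \<and>
     (\<forall>c\<in>C. c \<noteq> 0\<^sub>v n \<longrightarrow> d \<le> hweight c) \<and> (\<exists>c\<in>C. c \<noteq> 0\<^sub>v n \<and> hweight c = d)"

definition is_gen_matrix :: "nat \<Rightarrow> nat \<Rightarrow> 'a::field vec set \<Rightarrow> 'a mat \<Rightarrow> bool" where
  "is_gen_matrix n k C G \<longleftrightarrow> G \<in> carrier_mat k n \<and>
     C = {x. \<exists>y\<in>carrier_vec k. x = transpose_mat G *\<^sub>v y}"

definition is_pc_matrix :: "nat \<Rightarrow> nat \<Rightarrow> 'a::field vec set \<Rightarrow> 'a mat \<Rightarrow> bool" where
  "is_pc_matrix n k C H \<longleftrightarrow> H \<in> carrier_mat (n - k) n \<and>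
     C = {x\<in>carrier_vec n. H *\<^sub>v x = 0\<^sub>v (n - k)}"

definition mat_epow :: "'a::field mat \<Rightarrow> nat \<Rightarrow> 'a mat" where
  "mat_epow A m = map_mat (\<lambda>a. a ^ m) A"

definition galois_form :: "nat \<Rightarrow> nat \<Rightarrow> 'a::field vec \<Rightarrow> 'a vec \<Rightarrow> 'a" where
  "galois_form p s x y = (\<Sum>i<dim_vec x. x $ i * (y $ i) ^ (p ^ s))"

definition galois_dual :: "nat \<Rightarrow> nat \<Rightarrow> nat \<Rightarrow> 'a::field vec set \<Rightarrow> 'a vec set" where
  "galois_dual p s n C = {x\<in>carrier_vec n. \<forall>c\<in>C. galois_form p s c x = 0}"

text \<open>Trace F_q \<rightarrow> F_p (q = p^e), and its value as a natural number j < p (F_p = {of_nat j}).\<close>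
definition ftrace :: "nat \<Rightarrow> nat \<Rightarrow> 'a::field \<Rightarrow> 'a" where
  "ftrace p e x = (\<Sum>i<e. x ^ (p ^ i))"

definition trace_nat :: "nat \<Rightarrow> nat \<Rightarrow> 'a::field \<Rightarrow> nat" where
  "trace_nat p e x = (THE j. j < p \<and> of_nat j = ftrace p e x)"

definition chi :: "nat \<Rightarrow> nat \<Rightarrow> 'a::field \<Rightarrow> complex" where
  "chi p e x = cis (2 * pi * real (trace_nat p e x) / real p)"

text \<open>V_n: a state is a complex function on F_q^n (coefficients w.r.t. the basis |c>),
  vanishing outside F_q^n = carrier_vec n.\<close>
definition states :: "nat \<Rightarrow> ('a vec \<Rightarrow> complex) set" where
  "states n = {v. \<forall>x. x \<notin> carrier_vec n \<longrightarrow> v x = 0}"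

definition qscale :: "complex \<Rightarrow> ('a vec \<Rightarrow> complex) \<Rightarrow> ('a vec \<Rightarrow> complex)" where
  "qscale c v = (\<lambda>x. c * v x)"

definition qinner :: "nat \<Rightarrow> ('a vec \<Rightarrow> complex) \<Rightarrow> ('a vec \<Rightarrow> complex) \<Rightarrow> complex" where
  "qinner n u v = (\<Sum>x\<in>carrier_vec n. cnj (u x) * v x)"

text \<open>Action of the error omega^c X(a) Z(b):
  X(a) Z(b) |x> = omega^(tr(b.x)) |x + a>, hence (E v)(y) = omega^c omega^(tr(b.(y-a))) v(y-a).\<close>
definition err_apply :: "nat \<Rightarrow> nat \<Rightarrow> nat \<Rightarrow> nat \<Rightarrow> 'a::field vec \<Rightarrow> 'a vec
    \<Rightarrow> ('a vec \<Rightarrow> complex) \<Rightarrow> ('a vec \<Rightarrow> complex)" where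
  "err_apply p e n c a b v = (\<lambda>y. if y \<in> carrier_vec n
      then cis (2 * pi * real c / real p) * chi p e (b \<bullet> (y - a)) * v (y - a) else 0)"

definition err_weight :: "nat \<Rightarrow> 'a::zero vec \<Rightarrow> 'a vec \<Rightarrow> nat" where
  "err_weight n a b = card {i. i < n \<and> (a $ i \<noteq> 0 \<or> b $ i \<noteq> 0)}"

text \<open>Q is an [[n,k,d]]_q quantum code (q = p^e): a complex subspace of V_n of dimension q^k
  such that every error of weight at most d-1 is detected; for k = 0 the purity convention
  <v|E|v> = 0 for all v in Q and all errors E of weight 1..d-1 is used.\<close>
definition quantum_code :: "nat \<Rightarrow> nat \<Rightarrow> nat \<Rightarrow> nat \<Rightarrow> nat \<Rightarrow> ('a::{finite,field} vec \<Rightarrow> complex) set \<Rightarrow> bool" where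
  "quantum_code p e n k d Q \<longleftrightarrow>
     Q \<subseteq> states n \<and> Modules.module.subspace qscale Q \<and>
     Vector_Spaces.vector_space.dim qscale Q = card (UNIV :: 'a set) ^ k \<and>
     (if k = 0 then
        (\<forall>v\<in>Q. \<forall>c a b. a \<in> carrier_vec n \<longrightarrow> b \<in> carrier_vec n \<longrightarrow>
            1 \<le> err_weight n a b \<longrightarrow> err_weight n a b \<le> d - 1 \<longrightarrow>
            qinner n v (err_apply p e n c a b v) = 0)
      else
        (\<forall>u\<in>Q. \<forall>v\<in>Q. qinner n u v = 0 \<longrightarrow> (\<forall>c a b. a \<in> carrier_vec n \<longrightarrow> b \<in> carrier_vec n \<longrightarrow>
            err_weight n a b \<le> d - 1 \<longrightarrow> qinner n u (err_apply p e n c a b v) = 0)))"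

end

theory Submission
  imports Defs "HOL-Library.Indicator_Function" "HOL-Computational_Algebra.Polynomial"
    "HOL-Number_Theory.Cong" "HOL-Algebra.Multiplicative_Group"
    "Berlekamp_Zassenhaus.Berlekamp_Type_Based"
begin

text \<open>Write \<open>\<sigma>(x) = x\<^bsup>p\<^sup>e\<^sup>-\<^sup>s\<^esup>\<close>. The \<open>s\<close>-Galois dual \<open>S\<close> of \<open>C\<^sub>2\<close> is the Euclidean
  dual of the twisted code \<open>\<sigma>(C\<^sub>2)\<close>, and either rank condition forces \<open>S \<subseteq> C\<^sub>1\<close>. The quantum
  code is the CSS code of this pair: the states supported on \<open>C\<^sub>1\<close> that are constant on the cosets
  of \<open>S\<close>, a space of dimension \<open>|C\<^sub>1/S| = q\<^bsup>k\<^sub>1+k\<^sub>2-n\<^esup>\<close>. Let \<open>X(a)Z(b)\<close> have weight below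
  \<open>min d\<^sub>1 d\<^sub>2\<close>. A nonzero \<open>a\<close> lies outside \<open>C\<^sub>1\<close>, so \<open>X(a)\<close> moves \<open>C\<^sub>1\<close> off itself. A nonzero
  \<open>b\<close> lies outside \<open>\<sigma>(C\<^sub>2) = S\<^sup>\<bottom>\<close>, so translating by a suitable element of \<open>S\<close>, which fixes
  the code states, multiplies \<open>\<langle>u|Z(b)|v\<rangle>\<close> by a nontrivial character value; hence it vanishes.\<close>

section \<open>Frobenius, trace and the additive character\<close>

lemma power_card_UNIV_eq_self:
  fixes x :: "'a::{finite,field}"
  shows "x ^ card (UNIV :: 'a set) = x"
proof (cases "x = 0")
  case False
  let ?U = "UNIV - {0} :: 'a set"
  have "(\<Prod>y\<in>?U. x * y) = \<Prod>?U"
    using False by (intro prod.reindex_bij_witness[of _ "\<lambda>y. y / x" "\<lambda>y. x * y"]) auto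
  then have "x ^ card ?U * \<Prod>?U = 1 * \<Prod>?U"
    by (simp add: prod.distrib)
  then have "x ^ card ?U = 1"
    by (subst (asm) mult_cancel_right) auto
  moreover have "card ?U = card (UNIV :: 'a set) - 1"
    by (simp add: card_Diff_singleton)
  moreover have "card (UNIV :: 'a set) > 0"
    by (rule finite_UNIV_card_ge_0) simp
  ultimately show ?thesis
    by (metis Suc_diff_1 power_Suc2 mult_1)
qed (simp add: finite_UNIV_card_ge_0)

locale finite_field_char =
  fixes p e :: nat and ty :: "'a::{finite,field} itself"
  assumes prime_p: "prime p" and CHAR_eq: "CHAR('a) = p"
    and card_UNIV_eq: "card (UNIV :: 'a set) = p ^ e" and e_pos: "1 \<le> e"
begin

lemma p_gt_1: "p > 1"
  using prime_p prime_gt_1_nat by blast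

lemma card_UNIV_gt_1: "card (UNIV :: 'a set) > 1"
  using one_less_power[OF p_gt_1, of e] e_pos by (simp add: card_UNIV_eq)

lemma power_p_power_add: "((x :: 'a) + y) ^ (p ^ i) = x ^ (p ^ i) + y ^ (p ^ i)"
  using prime_p CHAR_eq by (intro freshmans_dream') auto

lemma power_p_power_sum: "(sum f A :: 'a) ^ (p ^ i) = (\<Sum>x\<in>A. f x ^ (p ^ i))"
  using prime_p CHAR_eq by (intro freshmans_dream_sum') auto

lemma of_nat_eq_iff_below_p:
  "i < p \<Longrightarrow> j < p \<Longrightarrow> (of_nat i :: 'a) = of_nat j \<longleftrightarrow> i = j"
  by (auto simp: of_nat_eq_iff_cong_CHAR CHAR_eq intro: cong_less_modulus_unique_nat)

lemma of_nat_mod_p: "(of_nat (m mod p) :: 'a) = of_nat m"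
  by (simp add: of_nat_eq_iff_cong_CHAR CHAR_eq cong_def)

lemma ftrace_add: "ftrace p e (x + y :: 'a) = ftrace p e x + ftrace p e y"
  unfolding ftrace_def by (simp add: power_p_power_add sum.distrib)

lemma ftrace_power_p: "ftrace p e (x :: 'a) ^ p = ftrace p e x"
proof -
  have "x + ftrace p e x ^ (p ^ 1) = x + (\<Sum>i<e. x ^ (p ^ Suc i))"
    unfolding ftrace_def power_p_power_sum by (simp add: power_mult[symmetric] mult.commute)
  also have "\<dots> = (\<Sum>i<Suc e. x ^ (p ^ i))"
    by (subst sum.lessThan_Suc_shift) simp
  also have "\<dots> = x + ftrace p e x"
    using power_card_UNIV_eq_self[of x] by (simp add: ftrace_def card_UNIV_eq)
  finally show ?thesis
    by simp
qed

lemma of_nat_power_p: "(of_nat j :: 'a) ^ p = of_nat j"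
proof (induction j)
  case 0
  then show ?case
    using p_gt_1 by simp
next
  case (Suc j)
  have "(of_nat j + 1 :: 'a) ^ (p ^ 1) = of_nat j ^ (p ^ 1) + 1 ^ (p ^ 1)"
    by (rule power_p_power_add)
  then show ?case
    using Suc by (simp add: add.commute)
qed

lemma fixed_by_power_p_imp_of_nat:
  assumes "(z :: 'a) ^ p = z"
  shows "\<exists>j<p. of_nat j = z"
proof -
  \<comment> \<open>\<open>X\<^sup>p - X\<close> has at most \<open>p\<close> roots, and the \<open>p\<close> elements of the prime field are roots.\<close>
  define P :: "'a poly" where "P = monom 1 p - [:0, 1:]"
  have "coeff P p = 1"
    using p_gt_1 by (simp add: P_def coeff_pCons split: nat.split)
  then have P: "P \<noteq> 0"
    by auto
  have deg: "degree P \<le> p"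
    unfolding P_def by (rule degree_le) (use p_gt_1 in \<open>auto simp: coeff_pCons split: nat.split\<close>)
  have roots: "{x. poly P x = 0} = {x :: 'a. x ^ p = x}"
    by (auto simp: P_def poly_monom)
  have fin: "finite {x :: 'a. x ^ p = x}"
    using poly_roots_finite[OF P] roots by simp
  have sub: "of_nat ` {..<p} \<subseteq> {x :: 'a. x ^ p = x}"
    using of_nat_power_p by auto
  have "inj_on (of_nat :: nat \<Rightarrow> 'a) {..<p}"
    by (rule inj_onI) (use of_nat_eq_iff_below_p in auto)
  then have "card (of_nat ` {..<p} :: 'a set) = p"
    by (simp add: card_image)
  moreover have "card {x :: 'a. x ^ p = x} \<le> p"
    using card_poly_roots_bound[OF P] deg roots by simp
  moreover have "card (of_nat ` {..<p} :: 'a set) \<le> card {x :: 'a. x ^ p = x}"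
    by (rule card_mono[OF fin sub])
  ultimately have "card (of_nat ` {..<p} :: 'a set) = card {x :: 'a. x ^ p = x}"
    by linarith
  then have "of_nat ` {..<p} = {x :: 'a. x ^ p = x}"
    by (rule card_subset_eq[OF fin sub])
  then have "z \<in> of_nat ` {..<p}"
    using assms by (simp only: mem_Collect_eq)
  then show ?thesis
    by (auto simp only: image_iff lessThan_iff)
qed

lemma trace_nat_spec: "trace_nat p e x < p \<and> of_nat (trace_nat p e x) = ftrace p e (x :: 'a)"
proof -
  obtain j where "j < p" "of_nat j = ftrace p e x"
    using fixed_by_power_p_imp_of_nat[OF ftrace_power_p] by blast
  then have "\<exists>!j. j < p \<and> of_nat j = ftrace p e x"
    by (metis of_nat_eq_iff_below_p)
  then show ?thesis
    unfolding trace_nat_def by (rule theI')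
qed

lemma trace_nat_eqI: "j < p \<Longrightarrow> of_nat j = ftrace p e (x :: 'a) \<Longrightarrow> trace_nat p e x = j"
  using trace_nat_spec[of x] of_nat_eq_iff_below_p by metis

lemma trace_nat_add: "trace_nat p e (x + y :: 'a) = (trace_nat p e x + trace_nat p e y) mod p"
proof (rule trace_nat_eqI)
  show "(trace_nat p e x + trace_nat p e y) mod p < p"
    using p_gt_1 by simp
  show "of_nat ((trace_nat p e x + trace_nat p e y) mod p) = ftrace p e (x + y)"
    using trace_nat_spec[of x] trace_nat_spec[of y]
    by (simp add: of_nat_mod_p ftrace_add)
qed

lemma cis_mod_p: "cis (2 * pi * real (m mod p) / real p) = cis (2 * pi * real m / real p)"
proof -
  have "real m = real (m mod p) + real p * real (m div p)"
    by (metis mod_mult_div_eq of_nat_add of_nat_mult)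
  then have "2 * pi * real m / real p = 2 * pi * real (m mod p) / real p + 2 * pi * real (m div p)"
    using p_gt_1 by (simp add: field_simps)
  then show ?thesis
    by (simp flip: cis_mult)
qed

lemma chi_add: "chi p e (x + y :: 'a) = chi p e x * chi p e y"
  unfolding chi_def trace_nat_add cis_mod_p cis_mult
  by (simp add: add_divide_distrib ring_distribs)

lemma chi_zero: "chi p e (0 :: 'a) = 1"
proof -
  have "trace_nat p e (0 :: 'a) = 0"
    using p_gt_1 by (intro trace_nat_eqI) (auto simp: ftrace_def)
  then show ?thesis
    by (simp add: chi_def)
qed

lemma ex_ftrace_ne_0: "\<exists>t :: 'a. ftrace p e t \<noteq> 0"
proof (rule ccontr)
  assume trace_zero: "\<not> ?thesis"
  \<comment> \<open>The trace is a polynomial of degree \<open>p\<^sup>e\<^sup>-\<^sup>1 < q\<close>, so it has fewer than \<open>q\<close> roots.\<close>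
  define P :: "'a poly" where "P = (\<Sum>i<e. monom 1 (p ^ i))"
  have coeff_P: "coeff P k = (\<Sum>i<e. if p ^ i = k then 1 else 0)" for k
    by (simp add: P_def coeff_sum coeff_monom)
  have "coeff P (p ^ (e - 1)) = (\<Sum>i\<in>{e - 1}. 1)"
    unfolding coeff_P
    by (rule sum.mono_neutral_cong_right) (use e_pos p_gt_1 in \<open>auto simp: power_inject_exp\<close>)
  then have "P \<noteq> 0"
    by auto
  moreover have "degree P \<le> p ^ (e - 1)"
  proof (rule degree_le, intro allI impI)
    fix k assume k: "p ^ (e - 1) < k"
    have "p ^ i \<noteq> k" if "i < e" for i
      using that k p_gt_1 power_increasing[of i "e - 1" p] by auto
    then show "coeff P k = 0"
      unfolding coeff_P by (intro sum.neutral) auto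
  qed
  moreover have "{x. poly P x = 0} = (UNIV :: 'a set)"
    using trace_zero by (auto simp: P_def ftrace_def poly_sum poly_monom)
  ultimately have "card (UNIV :: 'a set) \<le> p ^ (e - 1)"
    using card_poly_roots_bound by fastforce
  moreover have "p ^ (e - 1) < p ^ e"
    using p_gt_1 e_pos by (simp add: power_strict_increasing_iff)
  ultimately show False
    by (simp add: card_UNIV_eq)
qed

lemma ex_chi_ne_1: "\<exists>t :: 'a. chi p e t \<noteq> 1"
proof -
  obtain t :: 'a where "ftrace p e t \<noteq> 0"
    using ex_ftrace_ne_0 by blast
  then have j: "0 < trace_nat p e t" "trace_nat p e t < p"
    using trace_nat_spec[of t] by (auto intro: gr0I)
  have "chi p e t \<noteq> 1"
  proof
    assume "chi p e t = 1"
    then have "cos (2 * pi * real (trace_nat p e t) / real p) = 1"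
      unfolding chi_def by (metis cis.sel(1) one_complex.sel(1))
    then obtain k :: int where "2 * pi * real (trace_nat p e t) / real p = k * 2 * pi"
      by (auto simp: cos_one_2pi_int)
    then have jk: "real (trace_nat p e t) = k * real p"
      using p_gt_1 by (simp add: field_simps)
    have "real_of_int k * real p > 0" "real_of_int k * real p < 1 * real p"
      using j unfolding jk[symmetric] by simp_all
    then have "0 < k" "k < 1"
      using p_gt_1 by (simp_all add: zero_less_mult_iff mult_less_cancel_right)
    then show False
      by simp
  qed
  then show ?thesis
    by blast
qed

end

section \<open>Subspaces of \<open>\<bbbF>\<^sub>q\<^sup>n\<close> and orthogonal complements\<close>

lemma sum_eq_0_if_bij_scales:
  fixes f :: "'b \<Rightarrow> 'c::field"
  assumes "bij_betw h A A" "\<And>x. x \<in> A \<Longrightarrow> f (h x) = z * f x" "z \<noteq> 1"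
  shows "sum f A = 0"
proof -
  have "sum f A = (\<Sum>x\<in>A. f (h x))"
    by (rule sum.reindex_bij_betw[OF assms(1), symmetric])
  also have "\<dots> = z * sum f A"
    by (simp add: sum_distrib_left assms(2))
  finally have "(1 - z) * sum f A = 0"
    by (simp add: algebra_simps)
  then show ?thesis
    using assms(3) by simp
qed

definition vec_subspace :: "nat \<Rightarrow> 'a::field vec set \<Rightarrow> bool" where
  "vec_subspace n W \<longleftrightarrow> W \<subseteq> carrier_vec n \<and> 0\<^sub>v n \<in> W \<and>
     (\<forall>x\<in>W. \<forall>y\<in>W. x + y \<in> W) \<and> (\<forall>c. \<forall>x\<in>W. c \<cdot>\<^sub>v x \<in> W)"

definition orth :: "nat \<Rightarrow> 'a::field vec set \<Rightarrow> 'a vec set" where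
  "orth n W = {y \<in> carrier_vec n. \<forall>x\<in>W. x \<bullet> y = 0}"

lemma vec_subspaceI:
  assumes "W \<subseteq> carrier_vec n" "0\<^sub>v n \<in> W" "\<And>x y. x \<in> W \<Longrightarrow> y \<in> W \<Longrightarrow> x + y \<in> W"
    "\<And>c x. x \<in> W \<Longrightarrow> c \<cdot>\<^sub>v x \<in> W"
  shows "vec_subspace n W"
  unfolding vec_subspace_def using assms by blast

lemma
  assumes "vec_subspace n W"
  shows vec_subspace_carrier: "W \<subseteq> carrier_vec n"
    and vec_subspace_zero: "0\<^sub>v n \<in> W"
    and vec_subspace_add: "x \<in> W \<Longrightarrow> y \<in> W \<Longrightarrow> x + y \<in> W"
    and vec_subspace_smult: "x \<in> W \<Longrightarrow> c \<cdot>\<^sub>v x \<in> W"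
  using assms unfolding vec_subspace_def by blast+

lemma vec_subspace_finite: "vec_subspace n (W :: 'a::{finite,field} vec set) \<Longrightarrow> finite W"
  using finite_subset[OF vec_subspace_carrier finite_carrier_vec] .

lemma vec_subspace_carrier_vec: "vec_subspace n (carrier_vec n)"
  by (rule vec_subspaceI) auto

lemma vec_subspace_diff:
  assumes W: "vec_subspace n W" and x: "x \<in> W" and y: "y \<in> W"
  shows "x - y \<in> W"
proof -
  have "x - y = x + (- 1) \<cdot>\<^sub>v y"
    using x y vec_subspace_carrier[OF W] by (intro eq_vecI) fastforce+
  then show ?thesis
    using vec_subspace_add[OF W x vec_subspace_smult[OF W y]] by simp
qed

lemma add_minus_cancel_vec: "x \<in> carrier_vec n \<Longrightarrow> w \<in> carrier_vec n \<Longrightarrow> x + w - w = (x :: 'a::ab_group_add vec)"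
  by (intro eq_vecI) auto

lemma minus_add_cancel_vec: "x \<in> carrier_vec n \<Longrightarrow> w \<in> carrier_vec n \<Longrightarrow> x - w + w = (x :: 'a::ab_group_add vec)"
  by (intro eq_vecI) auto

lemma bij_betw_add_right_vec_subspace:
  assumes W: "vec_subspace n W" and w: "w \<in> W"
  shows "bij_betw (\<lambda>x. x + w) W W"
proof (rule bij_betwI[where g = "\<lambda>x. x - w"])
  show "(\<lambda>x. x + w) \<in> W \<rightarrow> W" "(\<lambda>x. x - w) \<in> W \<rightarrow> W"
    using vec_subspace_add[OF W _ w] vec_subspace_diff[OF W _ w] by blast+
  show "x + w - w = x" "x - w + w = x" if "x \<in> W" for x
    using that w vec_subspace_carrier[OF W] add_minus_cancel_vec minus_add_cancel_vec by blast+
qed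

lemma orth_carrier: "orth n W \<subseteq> carrier_vec n"
  by (auto simp: orth_def)

lemma orth_antimono: "A \<subseteq> B \<Longrightarrow> orth n B \<subseteq> orth n A"
  by (auto simp: orth_def)

lemma vec_subspace_orth:
  assumes "W \<subseteq> carrier_vec n"
  shows "vec_subspace n (orth n W)"
proof (rule vec_subspaceI[OF orth_carrier])
  show "0\<^sub>v n \<in> orth n W"
    using assms by (auto simp: orth_def)
  show "y + z \<in> orth n W" if "y \<in> orth n W" "z \<in> orth n W" for y z
    using that assms by (auto simp: orth_def scalar_prod_add_distrib[of _ n])
  show "c \<cdot>\<^sub>v y \<in> orth n W" if "y \<in> orth n W" for c y
    using that assms by (auto simp: orth_def)
qed

lemma orth_carrier_vec: "orth n (carrier_vec n :: 'a::field vec set) = {0\<^sub>v n}"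
proof safe
  fix y :: "'a vec" assume y: "y \<in> orth n (carrier_vec n)"
  show "y = 0\<^sub>v n"
  proof (rule eq_vecI)
    fix i assume "i < dim_vec (0\<^sub>v n :: 'a vec)"
    then show "y $ i = 0\<^sub>v n $ i"
      using y unit_vec_carrier[of n i] scalar_prod_left_unit[of y n i] by (auto simp: orth_def)
  qed (use y in \<open>auto simp: orth_def\<close>)
qed (auto simp: orth_def)

context finite_field_char
begin

lemma ex_chi_ne_1_in_subspace:
  fixes W :: "'a vec set"
  assumes W: "vec_subspace n W" and b: "b \<in> carrier_vec n" and x: "x \<in> W" "b \<bullet> x \<noteq> 0"
  shows "\<exists>w\<in>W. chi p e (b \<bullet> w) \<noteq> 1"
proof -
  obtain t :: 'a where t: "chi p e t \<noteq> 1"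
    using ex_chi_ne_1 by blast
  have "(t / (b \<bullet> x)) \<cdot>\<^sub>v x \<in> W"
    using vec_subspace_smult[OF W x(1)] .
  moreover have "b \<bullet> ((t / (b \<bullet> x)) \<cdot>\<^sub>v x) = t"
    using b x subsetD[OF vec_subspace_carrier[OF W] x(1)] by (subst scalar_prod_smult_right) auto
  ultimately show ?thesis
    using t by metis
qed

lemma sum_chi_scalar_prod:
  fixes W :: "'a vec set"
  assumes W: "vec_subspace n W" and b: "b \<in> carrier_vec n"
  shows "(\<Sum>x\<in>W. chi p e (b \<bullet> x)) = (if \<forall>x\<in>W. b \<bullet> x = 0 then of_nat (card W) else 0)"
proof (cases "\<forall>x\<in>W. b \<bullet> x = 0")
  case False
  then obtain w where w: "w \<in> W" "chi p e (b \<bullet> w) \<noteq> 1"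
    using ex_chi_ne_1_in_subspace[OF W b] by blast
  have "(\<Sum>x\<in>W. chi p e (b \<bullet> x)) = 0"
  proof (rule sum_eq_0_if_bij_scales[OF bij_betw_add_right_vec_subspace[OF W w(1)] _ w(2)])
    fix x assume "x \<in> W"
    then have "b \<bullet> (x + w) = b \<bullet> x + b \<bullet> w"
      using b w(1) vec_subspace_carrier[OF W] by (intro scalar_prod_add_distrib) auto
    then show "chi p e (b \<bullet> (x + w)) = chi p e (b \<bullet> w) * chi p e (b \<bullet> x)"
      by (simp add: chi_add mult.commute)
  qed
  then show ?thesis
    by (simp only: if_not_P[OF False])
qed (simp add: chi_zero)

lemma card_mult_card_orth:
  fixes W :: "'a vec set"
  assumes W: "vec_subspace n W"
  shows "card W * card (orth n W) = card (UNIV :: 'a set) ^ n"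
proof -
  have comm: "x \<bullet> b = b \<bullet> x" if "x \<in> W" "b \<in> carrier_vec n" for x b
    by (rule comm_scalar_prod) (use that vec_subspace_carrier[OF W] in auto)
  have zero_iff: "(\<forall>b\<in>carrier_vec n. x \<bullet> b = 0) \<longleftrightarrow> x = 0\<^sub>v n" if "x \<in> W" for x
  proof -
    have "(\<forall>b\<in>carrier_vec n. x \<bullet> b = 0) \<longleftrightarrow> x \<in> orth n (carrier_vec n)"
      using that vec_subspace_carrier[OF W] comm[OF that] unfolding orth_def by auto
    then show ?thesis
      unfolding orth_carrier_vec by simp
  qed
  \<comment> \<open>Double counting of \<open>\<Sum>\<^sub>b \<Sum>\<^sub>x \<chi>(b \<bullet> x)\<close> over \<open>b \<in> \<bbbF>\<^sub>q\<^sup>n\<close>, \<open>x \<in> W\<close>.\<close>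
  have "of_nat (card (orth n W) * card W)
      = (\<Sum>b\<in>carrier_vec n. if b \<in> orth n W then of_nat (card W) else 0 :: complex)"
    using Int_absorb1[OF orth_carrier[of n W]] by (simp add: sum.If_cases)
  also have "\<dots> = (\<Sum>b\<in>carrier_vec n. \<Sum>x\<in>W. chi p e (b \<bullet> x))"
    using comm by (intro sum.cong) (auto simp: sum_chi_scalar_prod[OF W] orth_def)
  also have "\<dots> = (\<Sum>x\<in>W. \<Sum>b\<in>carrier_vec n. chi p e (x \<bullet> b))"
  proof (subst sum.swap, intro sum.cong refl)
    fix x b :: "'a vec" assume "x \<in> W" "b \<in> carrier_vec n"
    then show "chi p e (b \<bullet> x) = chi p e (x \<bullet> b)"
      using comm by metis
  qed
  also have "\<dots> = (\<Sum>x\<in>W. if x = 0\<^sub>v n then of_nat (card (UNIV :: 'a set) ^ n) else 0)"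
    using vec_subspace_carrier[OF W] zero_iff
    by (intro sum.cong refl) (auto simp: sum_chi_scalar_prod[OF vec_subspace_carrier_vec] card_carrier_vec chi_zero)
  also have "\<dots> = of_nat (card (UNIV :: 'a set) ^ n)"
    using vec_subspace_finite[OF W] vec_subspace_zero[OF W] by (simp add: sum.delta')
  finally show ?thesis
    by (simp only: of_nat_eq_iff mult.commute)
qed

lemma orth_orth:
  fixes W :: "'a vec set"
  assumes W: "vec_subspace n W"
  shows "orth n (orth n W) = W"
proof -
  have W': "vec_subspace n (orth n W)" and W'': "vec_subspace n (orth n (orth n W))"
    using vec_subspace_orth orth_carrier vec_subspace_carrier[OF W] by blast+
  have sub: "W \<subseteq> orth n (orth n W)"
    using vec_subspace_carrier[OF W] comm_scalar_prod by (fastforce simp: orth_def)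
  have "card W * card (orth n W) = card (orth n (orth n W)) * card (orth n W)"
    using card_mult_card_orth[OF W] card_mult_card_orth[OF W'] by (simp add: mult.commute)
  moreover have "card (orth n W) > 0"
    using vec_subspace_finite[OF W'] vec_subspace_zero[OF W'] by (auto simp: card_gt_0_iff)
  ultimately show ?thesis
    using card_subset_eq[OF vec_subspace_finite[OF W''] sub] by simp
qed

end

section \<open>The CSS code of a pair of codes\<close>

definition vcoset :: "'a::field vec set \<Rightarrow> 'a vec \<Rightarrow> 'a vec set" where
  "vcoset S x = (\<lambda>t. x + t) ` S"

definition coset_states :: "'a::field vec set \<Rightarrow> 'a vec set \<Rightarrow> ('a vec \<Rightarrow> complex) set" where
  "coset_states C S = {f. (\<forall>x. x \<notin> C \<longrightarrow> f x = 0) \<and> (\<forall>x\<in>C. \<forall>t\<in>S. f (x + t) = f x)}"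

lemma vector_space_qscale: "vector_space (qscale :: complex \<Rightarrow> ('a vec \<Rightarrow> complex) \<Rightarrow> _)"
  by unfold_locales (auto simp: qscale_def fun_eq_iff algebra_simps)

lemma sum_fun_apply: "(\<Sum>i\<in>A. f i) x = (\<Sum>i\<in>A. f i x)"
  by (induct A rule: infinite_finite_induct) auto

context
  fixes n :: nat and C S :: "'a::{finite,field} vec set"
  assumes C: "vec_subspace n C" and S: "vec_subspace n S" and S_sub_C: "S \<subseteq> C"
begin

lemma vcoset_subset: "x \<in> C \<Longrightarrow> vcoset S x \<subseteq> C"
  using vec_subspace_add[OF C] S_sub_C by (auto simp: vcoset_def)

lemma mem_vcoset_self: "x \<in> C \<Longrightarrow> x \<in> vcoset S x"
  using vec_subspace_zero[OF S] vec_subspace_carrier[OF C] unfolding vcoset_def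
  by (force intro: image_eqI[of _ _ "0\<^sub>v n"])

lemma vcoset_add:
  assumes x: "x \<in> C" and t: "t \<in> S"
  shows "vcoset S (x + t) = vcoset S x"
proof -
  have "x + t + u = x + (u + t)" if "u \<in> S" for u
  proof -
    have "x \<in> carrier_vec n" "t \<in> carrier_vec n" "u \<in> carrier_vec n"
      using x t that S_sub_C vec_subspace_carrier[OF C] by auto
    then show ?thesis
      by (intro eq_vecI) auto
  qed
  then have "vcoset S (x + t) = (\<lambda>u. x + u) ` ((\<lambda>u. u + t) ` S)"
    unfolding vcoset_def image_image by (rule image_cong[OF refl])
  also have "(\<lambda>u. u + t) ` S = S"
    using bij_betw_imp_surj_on[OF bij_betw_add_right_vec_subspace[OF S t]] .
  finally show ?thesis
    by (simp add: vcoset_def)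
qed

lemma mem_vcoset_iff:
  assumes x: "x \<in> C" and y: "y \<in> C"
  shows "y \<in> vcoset S x \<longleftrightarrow> vcoset S y = vcoset S x"
proof
  assume "y \<in> vcoset S x"
  then obtain t where "t \<in> S" "y = x + t"
    by (auto simp: vcoset_def)
  then show "vcoset S y = vcoset S x"
    using vcoset_add[OF x] by simp
next
  assume "vcoset S y = vcoset S x"
  then show "y \<in> vcoset S x"
    using mem_vcoset_self[OF y] by simp
qed

lemma card_vcoset: "x \<in> C \<Longrightarrow> card (vcoset S x) = card S"
  unfolding vcoset_def
proof (intro card_image inj_onI)
  fix a b assume "x \<in> C" "a \<in> S" "b \<in> S" "x + a = x + b"
  then show "a = b"
    using vec_subspace_carrier[OF C] vec_subspace_carrier[OF S] add_minus_cancel_vec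
    by (metis comm_add_vec subsetD)
qed

lemma card_vcosets_mult_card: "card (vcoset S ` C) * card S = card C"
proof -
  have "\<Union>(vcoset S ` C) = C"
    using vcoset_subset mem_vcoset_self by blast
  moreover have "A = B" if "A \<in> vcoset S ` C" "B \<in> vcoset S ` C" "z \<in> A" "z \<in> B" for A B z
    using that vcoset_subset mem_vcoset_iff by (metis imageE subsetD)
  ultimately show ?thesis
    using card_partition[of "vcoset S ` C" "card S"] vec_subspace_finite[OF C] card_vcoset
    by (metis (no_types, lifting) disjoint_iff finite_imageI imageE mult.commute)
qed

lemma coset_states_translate:
  assumes f: "f \<in> coset_states C S" and t: "t \<in> S" and y: "y \<in> carrier_vec n"
  shows "f (y + t) = f y"
proof (cases "y \<in> C")
  case False
  have "y + t - t = y"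
    using y t vec_subspace_carrier[OF S] add_minus_cancel_vec by blast
  then have "y + t \<notin> C"
    using False vec_subspace_diff[OF C _ subsetD[OF S_sub_C t]] by metis
  then show ?thesis
    using False f by (simp add: coset_states_def)
qed (use f t in \<open>simp add: coset_states_def\<close>)

lemma indicator_vcoset_eq:
  "x \<in> C \<Longrightarrow> y \<in> C \<Longrightarrow> indicator (vcoset S x) y = (if vcoset S y = vcoset S x then 1 else 0)"
  by (simp add: mem_vcoset_iff indicator_def)

lemma indicator_vcoset_mem:
  assumes x: "x \<in> C"
  shows "indicator (vcoset S x) \<in> coset_states C S"
  unfolding coset_states_def
proof (intro CollectI conjI allI impI ballI)
  show "indicator (vcoset S x) y = 0" if "y \<notin> C" for y
    using that vcoset_subset[OF x] by (auto simp: indicator_def)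
  fix y t assume y: "y \<in> C" and t: "t \<in> S"
  have "y + t \<in> C"
    using vec_subspace_add[OF C y] t S_sub_C by blast
  then have "y + t \<in> vcoset S x \<longleftrightarrow> y \<in> vcoset S x"
    using mem_vcoset_iff[OF x] vcoset_add[OF y t] y by simp
  then show "indicator (vcoset S x) (y + t) = indicator (vcoset S x) y"
    by (simp add: indicator_def)
qed

lemma coset_states_eq_sum:
  assumes f: "f \<in> coset_states C S"
  shows "f = (\<Sum>T\<in>vcoset S ` C. qscale (f (SOME x. x \<in> T)) (indicator T))"
proof
  fix y
  show "f y = (\<Sum>T\<in>vcoset S ` C. qscale (f (SOME x. x \<in> T)) (indicator T)) y"
  proof (cases "y \<in> C")
    case True
    have "(\<Sum>T\<in>vcoset S ` C. qscale (f (SOME x. x \<in> T)) (indicator T)) y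
        = (\<Sum>T\<in>vcoset S ` C. if T = vcoset S y then f (SOME x. x \<in> T) else 0)"
      using True by (auto simp: sum_fun_apply qscale_def indicator_vcoset_eq intro!: sum.cong)
    also have "\<dots> = f (SOME x. x \<in> vcoset S y)"
      using True vec_subspace_finite[OF C] by (simp add: sum.delta')
    also have "\<dots> = f y"
      using f True mem_vcoset_self[OF True] by (auto simp: coset_states_def vcoset_def intro: someI2)
    finally show ?thesis
      by simp
  next
    case False
    then have "indicator T y = (0 :: complex)" if "T \<in> vcoset S ` C" for T
      using that vcoset_subset by (auto simp: indicator_def)
    then show ?thesis
      using f False by (simp add: sum_fun_apply qscale_def coset_states_def)
  qed
qed

lemma coset_states_subspace: "Modules.module.subspace qscale (coset_states C S)"
proof -
  interpret V: vector_space "qscale :: complex \<Rightarrow> ('a vec \<Rightarrow> complex) \<Rightarrow> _"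
    by (rule vector_space_qscale)
  show ?thesis
    unfolding V.subspace_def coset_states_def qscale_def by auto
qed

lemma indicator_vcoset_apply:
  assumes "f \<in> indicator ` vcoset S ` C" "x \<in> C"
  shows "f x = (if f = indicator (vcoset S x) then 1 else (0 :: complex))"
  using assms mem_vcoset_self by (auto simp: indicator_vcoset_eq)

lemma dim_coset_states: "Vector_Spaces.vector_space.dim qscale (coset_states C S) = card (vcoset S ` C)"
proof -
  interpret V: vector_space "qscale :: complex \<Rightarrow> ('a vec \<Rightarrow> complex) \<Rightarrow> _"
    by (rule vector_space_qscale)
  let ?B = "indicator ` vcoset S ` C :: ('a vec \<Rightarrow> complex) set"
  have B: "?B \<subseteq> coset_states C S"
    using indicator_vcoset_mem by auto
  have "coset_states C S \<subseteq> V.span ?B"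
  proof
    fix f assume "f \<in> coset_states C S"
    then have "f = (\<Sum>T\<in>vcoset S ` C. qscale (f (SOME x. x \<in> T)) (indicator T))"
      by (rule coset_states_eq_sum)
    also have "\<dots> \<in> V.span ?B"
      by (intro V.span_sum V.span_scale V.span_base) auto
    finally show "f \<in> V.span ?B" .
  qed
  then have span: "V.span ?B = coset_states C S"
    using V.span_subspace[OF B _ coset_states_subspace] by blast
  have "V.independent ?B"
    unfolding V.independent_explicit_module
  proof (intro allI impI)
    fix t u g assume t: "finite t" "t \<subseteq> ?B" and "(\<Sum>v\<in>t. qscale (u v) v) = 0" and g: "g \<in> t"
    then obtain x where x: "x \<in> C" "g = indicator (vcoset S x)"
      by auto
    have "0 = (\<Sum>v\<in>t. qscale (u v) v) x"
      using \<open>(\<Sum>v\<in>t. qscale (u v) v) = 0\<close> by simp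
    also have "\<dots> = (\<Sum>v\<in>t. if v = g then u v else 0)"
    proof (unfold sum_fun_apply qscale_def, intro sum.cong refl)
      fix v assume "v \<in> t"
      then show "u v * v x = (if v = g then u v else 0)"
        using indicator_vcoset_apply[OF subsetD[OF t(2) \<open>v \<in> t\<close>] x(1)] x(2) by simp
    qed
    also have "\<dots> = u g"
      using t g by (simp add: sum.delta')
    finally show "u g = 0"
      by simp
  qed
  moreover have inj: "inj_on (indicator :: 'a vec set \<Rightarrow> 'a vec \<Rightarrow> complex) (vcoset S ` C)"
  proof (rule inj_onI)
    fix A B :: "'a vec set" assume "indicator A = (indicator B :: 'a vec \<Rightarrow> complex)"
    then have "x \<in> A \<longleftrightarrow> x \<in> B" for x
      using fun_cong indicator_eq_1_iff by metis
    then show "A = B"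
      by blast
  qed
  ultimately have "V.dim (coset_states C S) = card ?B"
    using V.dim_eq_card span V.span_eq_iff coset_states_subspace by metis
  then show ?thesis
    by (simp add: card_image inj)
qed

end

lemma hweight_le_err_weight:
  assumes "a \<in> carrier_vec n" "b \<in> carrier_vec n"
  shows "hweight a \<le> err_weight n a b" "hweight b \<le> err_weight n a b"
  using assms unfolding hweight_def err_weight_def by (auto intro!: card_mono)

lemma hweight_pos: "x \<in> carrier_vec n \<Longrightarrow> x \<noteq> 0\<^sub>v n \<Longrightarrow> 0 < hweight x"
  unfolding hweight_def by (subst card_gt_0_iff) (auto intro: eq_vecI)

lemma low_weight_notin_code:
  assumes "\<forall>c\<in>C. c \<noteq> 0\<^sub>v n \<longrightarrow> d \<le> hweight c" "x \<in> carrier_vec n" "x \<noteq> 0\<^sub>v n" "hweight x \<le> d - 1"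
  shows "x \<notin> C"
  using assms hweight_pos[OF assms(2,3)] by force

lemma qinner_err_apply_eq_0_if_shift_notin:
  fixes C :: "'a::field vec set"
  assumes C: "vec_subspace n C" and u: "\<forall>y. y \<notin> C \<longrightarrow> u y = 0" and v: "\<forall>y. y \<notin> C \<longrightarrow> v y = 0"
    and a: "a \<in> carrier_vec n" "a \<notin> C"
  shows "qinner n u (err_apply p e n c a b v) = 0"
  unfolding qinner_def
proof (intro sum.neutral ballI)
  fix y :: "'a vec" assume y: "y \<in> carrier_vec n"
  have "y \<notin> C \<or> y - a \<notin> C"
  proof (rule ccontr)
    assume "\<not> ?thesis"
    moreover have "y - (y - a) = a"
      using y a by (intro eq_vecI) auto
    ultimately show False
      using a vec_subspace_diff[OF C, of y "y - a"] by auto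
  qed
  then show "cnj (u y) * err_apply p e n c a b v y = 0"
    using u v by (auto simp: err_apply_def)
qed

lemma qinner_err_apply_phase:
  "qinner n u (err_apply p e n c (0\<^sub>v n) b v)
     = cis (2 * pi * real c / real p) * (\<Sum>y\<in>carrier_vec n. cnj (u y) * v y * chi p e (b \<bullet> y))"
  unfolding qinner_def err_apply_def sum_distrib_left
  by (intro sum.cong refl) (simp add: ac_simps)

lemma quantum_code_if_errors_act_trivially:
  fixes Q :: "('a::{finite,field} vec \<Rightarrow> complex) set"
  assumes "Q \<subseteq> states n" "Modules.module.subspace qscale Q"
    and "Vector_Spaces.vector_space.dim qscale Q = card (UNIV :: 'a set) ^ k"
    and errors: "\<And>u v c a b. u \<in> Q \<Longrightarrow> v \<in> Q \<Longrightarrow> a \<in> carrier_vec n \<Longrightarrow> b \<in> carrier_vec n \<Longrightarrow>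
       err_weight n a b \<le> d - 1 \<Longrightarrow> qinner n u (err_apply p e n c a b v)
         = (if a = 0\<^sub>v n \<and> b = 0\<^sub>v n then cis (2 * pi * real c / real p) * qinner n u v else 0)"
  shows "quantum_code p e n k d Q"
proof -
  have "err_weight n a b = 0" if "a = 0\<^sub>v n \<and> b = 0\<^sub>v n" for a b :: "'a vec"
    using that by (simp add: err_weight_def)
  then show ?thesis
    unfolding quantum_code_def using assms by (auto simp: errors)
qed

context finite_field_char
begin

lemma sum_chi_eq_0_if_notin_orth:
  fixes S :: "'a vec set"
  assumes S: "vec_subspace n S" and b: "b \<in> carrier_vec n" "b \<notin> orth n S"
    and g: "\<And>y t. y \<in> carrier_vec n \<Longrightarrow> t \<in> S \<Longrightarrow> g (y + t) = g y"
  shows "(\<Sum>y\<in>carrier_vec n. g y * chi p e (b \<bullet> y)) = 0"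
proof -
  obtain x where "x \<in> S" "b \<bullet> x \<noteq> 0"
    using b vec_subspace_carrier[OF S] comm_scalar_prod by (fastforce simp: orth_def)
  then obtain w where w: "w \<in> S" "chi p e (b \<bullet> w) \<noteq> 1"
    using ex_chi_ne_1_in_subspace[OF S b(1)] by blast
  then have w_carrier: "w \<in> carrier_vec n"
    using vec_subspace_carrier[OF S] by blast
  show ?thesis
  proof (rule sum_eq_0_if_bij_scales)
    show "bij_betw (\<lambda>y. y + w) (carrier_vec n) (carrier_vec n)"
      using bij_betw_add_right_vec_subspace[OF vec_subspace_carrier_vec w_carrier] .
    fix y :: "'a vec" assume "y \<in> carrier_vec n"
    moreover have "b \<bullet> (y + w) = b \<bullet> y + b \<bullet> w"
      using \<open>y \<in> carrier_vec n\<close> b w_carrier by (intro scalar_prod_add_distrib) auto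
    ultimately show "g (y + w) * chi p e (b \<bullet> (y + w)) = chi p e (b \<bullet> w) * (g y * chi p e (b \<bullet> y))"
      using g w by (simp add: chi_add)
  qed (use w in simp)
qed

lemma coset_states_err_apply:
  fixes C K :: "'a vec set"
  assumes C: "vec_subspace n C" "\<forall>c\<in>C. c \<noteq> 0\<^sub>v n \<longrightarrow> d1 \<le> hweight c"
    and K: "vec_subspace n K" "\<forall>c\<in>K. c \<noteq> 0\<^sub>v n \<longrightarrow> d2 \<le> hweight c"
    and S_sub: "orth n K \<subseteq> C"
    and u: "u \<in> coset_states C (orth n K)" and v: "v \<in> coset_states C (orth n K)"
    and a: "a \<in> carrier_vec n" and b: "b \<in> carrier_vec n" and wt: "err_weight n a b \<le> min d1 d2 - 1"
  shows "qinner n u (err_apply p e n c a b v)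
           = (if a = 0\<^sub>v n \<and> b = 0\<^sub>v n then cis (2 * pi * real c / real p) * qinner n u v else 0)"
proof (cases "a = 0\<^sub>v n")
  case False
  then have "a \<notin> C"
    using low_weight_notin_code[OF C(2) a] hweight_le_err_weight[OF a b] wt by fastforce
  then show ?thesis
    using qinner_err_apply_eq_0_if_shift_notin[OF C(1) _ _ a] u v False
    by (simp add: coset_states_def)
next
  case a_0: True
  show ?thesis
  proof (cases "b = 0\<^sub>v n")
    case True
    have "(\<Sum>y\<in>carrier_vec n. cnj (u y) * v y * chi p e (0\<^sub>v n \<bullet> y)) = qinner n u v"
      unfolding qinner_def by (intro sum.cong refl) (simp add: chi_zero)
    then show ?thesis
      using a_0 True by (simp add: qinner_err_apply_phase)
  next
    case False
    have S: "vec_subspace n (orth n K)"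
      using vec_subspace_orth[OF vec_subspace_carrier[OF K(1)]] .
    have "b \<notin> orth n (orth n K)"
      using low_weight_notin_code[OF K(2) b False] hweight_le_err_weight[OF a b] wt orth_orth[OF K(1)]
      by fastforce
    then have "(\<Sum>y\<in>carrier_vec n. cnj (u y) * v y * chi p e (b \<bullet> y)) = 0"
      using coset_states_translate[OF C(1) S S_sub u] coset_states_translate[OF C(1) S S_sub v]
      by (intro sum_chi_eq_0_if_notin_orth[OF S b]) auto
    then show ?thesis
      using a_0 False by (simp add: qinner_err_apply_phase)
  qed
qed

theorem css_quantum_code:
  fixes C K :: "'a vec set"
  assumes C: "vec_subspace n C" "card C = card (UNIV :: 'a set) ^ k1"
      "\<forall>c\<in>C. c \<noteq> 0\<^sub>v n \<longrightarrow> d1 \<le> hweight c"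
    and K: "vec_subspace n K" "card K = card (UNIV :: 'a set) ^ k2"
      "\<forall>c\<in>K. c \<noteq> 0\<^sub>v n \<longrightarrow> d2 \<le> hweight c"
    and S_sub: "orth n K \<subseteq> C" and k1_k2: "n \<le> k1 + k2"
  shows "quantum_code p e n (k1 + k2 - n) (min d1 d2) (coset_states C (orth n K))"
proof (rule quantum_code_if_errors_act_trivially)
  let ?q = "card (UNIV :: 'a set)"
  have S: "vec_subspace n (orth n K)"
    using vec_subspace_orth[OF vec_subspace_carrier[OF K(1)]] .
  show "coset_states C (orth n K) \<subseteq> states n"
    using vec_subspace_carrier[OF C(1)] by (auto simp: coset_states_def states_def)
  show "Modules.module.subspace qscale (coset_states C (orth n K))"
    by (rule coset_states_subspace[OF C(1) S S_sub])
  have "card (vcoset (orth n K) ` C) * ?q ^ n = ?q ^ k1 * ?q ^ k2"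
    using card_vcosets_mult_card[OF C(1) S S_sub] card_mult_card_orth[OF K(1)] C(2) K(2)
    by (metis mult.assoc mult.commute)
  also have "\<dots> = ?q ^ (k1 + k2 - n) * ?q ^ n"
    using k1_k2 by (simp flip: power_add)
  finally show "Vector_Spaces.vector_space.dim qscale (coset_states C (orth n K)) = ?q ^ (k1 + k2 - n)"
    using card_UNIV_gt_1 by (simp add: dim_coset_states[OF C(1) S S_sub])
qed (use coset_states_err_apply[OF C(1,3) K(1,3) S_sub] in blast)

end

section \<open>Counting subspaces and matrix images\<close>

lemma (in vectorspace) lincomb_inj_on_basis:
  assumes fin: "finite \<beta>" and \<beta>: "basis \<beta>"
  shows "inj_on (\<lambda>a. lincomb a \<beta>) (\<beta> \<rightarrow>\<^sub>E carrier K)"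
proof (rule inj_onI)
  fix a b assume a: "a \<in> \<beta> \<rightarrow>\<^sub>E carrier K" and b: "b \<in> \<beta> \<rightarrow>\<^sub>E carrier K"
    and eq: "lincomb a \<beta> = lincomb b \<beta>"
  have \<beta>_carrier: "\<beta> \<subseteq> carrier V" and indpt: "lin_indpt \<beta>"
    using \<beta> by (auto simp: basis_def)
  have "lincomb (\<lambda>v. a v \<ominus>\<^bsub>K\<^esub> b v) \<beta> = lincomb a \<beta> \<ominus>\<^bsub>V\<^esub> lincomb b \<beta>"
    using a b by (intro lincomb_diff[OF fin \<beta>_carrier]) auto
  also have "\<dots> = \<zero>\<^bsub>V\<^esub>"
    using eq lincomb_closed[OF \<beta>_carrier, of b] b by (simp add: PiE_iff r_neg)
  finally have zero: "lincomb (\<lambda>v. a v \<ominus>\<^bsub>K\<^esub> b v) \<beta> = \<zero>\<^bsub>V\<^esub>" .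
  have "a v = b v" if "v \<in> \<beta>" for v
  proof (rule ccontr)
    assume "a v \<noteq> b v"
    moreover have "a v \<in> carrier K" "b v \<in> carrier K"
      using that a b by auto
    ultimately have "a v \<ominus>\<^bsub>K\<^esub> b v \<noteq> \<zero>\<^bsub>K\<^esub>"
      using ring.r_right_minus_eq[OF is_ring] by simp
    then have "lin_dep \<beta>"
      using a b that zero
      by (intro lin_dep_crit[OF fin subset_refl, of "\<lambda>v. a v \<ominus>\<^bsub>K\<^esub> b v" v]) (auto simp: PiE_iff)
    then show False
      using indpt by simp
  qed
  then show "a = b"
    using a b by (metis PiE_ext)
qed

lemma (in vectorspace) card_carrier_eq_power_dim:
  assumes fin: "finite (carrier V)"
  shows "card (carrier V) = card (carrier K) ^ dim"
proof -
  have "fin_dim"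
    unfolding fin_dim_def using fin span_is_subset2[of "carrier V"] in_own_span[of "carrier V"] by auto
  then obtain \<beta> where \<beta>: "finite \<beta>" "basis \<beta>"
    using finite_basis_exists by blast
  then have \<beta>_carrier: "\<beta> \<subseteq> carrier V" and span: "span \<beta> = carrier V"
    by (auto simp: basis_def)
  have "(\<lambda>a. lincomb a \<beta>) ` (\<beta> \<rightarrow>\<^sub>E carrier K) = carrier V"
  proof
    show "(\<lambda>a. lincomb a \<beta>) ` (\<beta> \<rightarrow>\<^sub>E carrier K) \<subseteq> carrier V"
      using \<beta>_carrier by (auto intro: lincomb_closed)
    show "carrier V \<subseteq> (\<lambda>a. lincomb a \<beta>) ` (\<beta> \<rightarrow>\<^sub>E carrier K)"
    proof
      fix v assume "v \<in> carrier V"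
      then obtain a where a: "a \<in> \<beta> \<rightarrow> carrier K" "lincomb a \<beta> = v"
        using finite_in_span[OF \<beta>(1) \<beta>_carrier] span by blast
      moreover have "lincomb (restrict a \<beta>) \<beta> = lincomb a \<beta>"
        by (rule lincomb_cong) (use a \<beta>_carrier in auto)
      ultimately show "v \<in> (\<lambda>a. lincomb a \<beta>) ` (\<beta> \<rightarrow>\<^sub>E carrier K)"
        by (intro image_eqI[of _ _ "restrict a \<beta>"]) auto
    qed
  qed
  then have "card (carrier V) = card (\<beta> \<rightarrow>\<^sub>E carrier K)"
    using card_image[OF lincomb_inj_on_basis[OF \<beta>]] by simp
  then show ?thesis
    using \<beta> dim_basis by (simp add: card_PiE)
qed

lemma is_fsubspace_iff_vec_subspace: "is_fsubspace n W \<longleftrightarrow> vec_subspace n (W :: 'a::field vec set)"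
proof
  assume "is_fsubspace n W"
  then interpret submodule class_ring W "module_vec TYPE('a) n"
    by (auto simp: is_fsubspace_def VectorSpace.subspace_def)
  show "vec_subspace n W"
    by (rule vec_subspaceI) (use subset m_closed zero_closed smult_closed in \<open>auto simp: module_vec_simps\<close>)
next
  assume W: "vec_subspace n W"
  interpret vec_space "TYPE('a)" n .
  have "submodule class_ring W (module_vec TYPE('a) n)"
    by (rule submodule.intro[OF vec_module])
      (use vec_subspace_carrier[OF W] vec_subspace_zero[OF W] vec_subspace_add[OF W]
        vec_subspace_smult[OF W] in \<open>auto simp: module_vec_simps\<close>)
  then show "is_fsubspace n W"
    unfolding is_fsubspace_def VectorSpace.subspace_def using vec_vs by auto
qed

lemma card_eq_power_fdim:
  assumes "is_fsubspace n (W :: 'a::{finite,field} vec set)"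
  shows "card W = card (UNIV :: 'a set) ^ fdim n W"
proof -
  interpret vec_space "TYPE('a)" n .
  have "vectorspace class_ring (V\<lparr>carrier := W\<rparr>)"
    using assms subspace_is_vs by (simp add: is_fsubspace_def)
  moreover have "finite W"
    using assms vec_subspace_finite is_fsubspace_iff_vec_subspace by blast
  ultimately show ?thesis
    using vectorspace.card_carrier_eq_power_dim by (fastforce simp: fdim_def)
qed

lemma vec_subspace_mat_image:
  assumes A: "A \<in> carrier_mat m n"
  shows "vec_subspace m ((\<lambda>x. A *\<^sub>v x) ` carrier_vec n :: 'a::field vec set)"
proof (rule vec_subspaceI)
  show "0\<^sub>v m \<in> (\<lambda>x. A *\<^sub>v x) ` carrier_vec n"
    using A by (intro image_eqI[of _ _ "0\<^sub>v n"]) auto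
  show "y + z \<in> (\<lambda>x. A *\<^sub>v x) ` carrier_vec n"
    if yz: "y \<in> (\<lambda>x. A *\<^sub>v x) ` carrier_vec n" "z \<in> (\<lambda>x. A *\<^sub>v x) ` carrier_vec n" for y z
  proof -
    obtain u w where "u \<in> carrier_vec n" "w \<in> carrier_vec n" "y = A *\<^sub>v u" "z = A *\<^sub>v w"
      using yz by auto
    then show ?thesis
      using mult_add_distrib_mat_vec[OF A] by (auto intro!: image_eqI[of _ _ "u + w"])
  qed
  show "c \<cdot>\<^sub>v y \<in> (\<lambda>x. A *\<^sub>v x) ` carrier_vec n" if y: "y \<in> (\<lambda>x. A *\<^sub>v x) ` carrier_vec n" for c y
  proof -
    obtain u where "u \<in> carrier_vec n" "y = A *\<^sub>v u"
      using y by auto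
    then show ?thesis
      using mult_mat_vec[OF A] by (auto intro!: image_eqI[of _ _ "c \<cdot>\<^sub>v u"])
  qed
qed (use A in auto)

lemma card_mat_image_eq_power_rank:
  fixes A :: "'a::{finite,field} mat"
  assumes A: "A \<in> carrier_mat m n"
  shows "card ((\<lambda>x. A *\<^sub>v x) ` carrier_vec n) = card (UNIV :: 'a set) ^ mat_rank A"
proof -
  interpret vec_space "TYPE('a)" m .
  have "(\<lambda>x. A *\<^sub>v x) ` carrier_vec n = col_space A"
    using col_space_eq[OF A] A by auto
  moreover have "set (cols A) \<subseteq> carrier_vec m"
    using A cols_dim by blast
  then have "is_fsubspace m (col_space A)"
    using span_is_subspace by (simp add: is_fsubspace_def col_space_def)
  moreover have "mat_rank A = fdim m (col_space A)"
    using A by (simp add: mat_rank_def fdim_def rank_def col_space_def)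
  ultimately show ?thesis
    using card_eq_power_fdim by metis
qed

lemma mult_mat_vec_zero [simp]: "A \<in> carrier_mat m n \<Longrightarrow> A *\<^sub>v 0\<^sub>v n = (0\<^sub>v m :: 'a::semiring_0 vec)"
  by (intro eq_vecI) (auto simp: row_def)

lemma vec_first_append: "u \<in> carrier_vec k \<Longrightarrow> vec_first (u @\<^sub>v w) k = u"
  unfolding vec_first_def by (intro eq_vecI) auto

lemma mem_orth_transpose_image_iff:
  fixes G :: "'a::field mat"
  assumes G: "G \<in> carrier_mat k n" and x: "x \<in> carrier_vec n"
  shows "x \<in> orth n ((\<lambda>y. transpose_mat G *\<^sub>v y) ` carrier_vec k) \<longleftrightarrow> G *\<^sub>v x \<in> orth k (carrier_vec k)"
proof -
  have "(transpose_mat G *\<^sub>v y) \<bullet> x = y \<bullet> (G *\<^sub>v x)" if "y \<in> carrier_vec k" for y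
    using transpose_vec_mult_scalar[OF G x that] .
  then show ?thesis
    using G x by (auto simp: orth_def)
qed

context finite_field_char
begin

lemma
  fixes C :: "'a vec set"
  assumes "lin_code n k d C"
  shows lin_code_vec_subspace: "vec_subspace n C"
    and lin_code_card: "card C = card (UNIV :: 'a set) ^ k"
    and lin_code_weight: "\<forall>c\<in>C. c \<noteq> 0\<^sub>v n \<longrightarrow> d \<le> hweight c"
    and lin_code_dim_le: "k \<le> n"
proof -
  show C: "vec_subspace n C" and card: "card C = card (UNIV :: 'a set) ^ k"
    using assms card_eq_power_fdim[of n C] is_fsubspace_iff_vec_subspace[of n C]
    by (auto simp: lin_code_def)
  show "\<forall>c\<in>C. c \<noteq> 0\<^sub>v n \<longrightarrow> d \<le> hweight c"
    using assms by (simp add: lin_code_def)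
  have "card C \<le> card (carrier_vec n :: 'a vec set)"
    by (rule card_mono[OF finite_carrier_vec vec_subspace_carrier[OF C]])
  then show "k \<le> n"
    using card_UNIV_gt_1 by (simp add: card card_carrier_vec)
qed

lemma card_mat_image_if_transpose_inj:
  fixes G :: "'a mat"
  assumes G: "G \<in> carrier_mat k n" and inj: "inj_on (\<lambda>y. transpose_mat G *\<^sub>v y) (carrier_vec k)"
  shows "card ((\<lambda>x. G *\<^sub>v x) ` carrier_vec n) = card (UNIV :: 'a set) ^ k"
proof -
  have "orth k ((\<lambda>x. G *\<^sub>v x) ` carrier_vec n) = {0\<^sub>v k}"
  proof safe
    fix z assume z: "z \<in> orth k ((\<lambda>x. G *\<^sub>v x) ` carrier_vec n)"
    then have z_carrier: "z \<in> carrier_vec k"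
      using orth_carrier by blast
    have "transpose_mat G *\<^sub>v z \<in> orth n (carrier_vec n)"
      using z mem_orth_transpose_image_iff[of "transpose_mat G" n k z] G z_carrier by simp
    then have "transpose_mat G *\<^sub>v z = transpose_mat G *\<^sub>v 0\<^sub>v k"
      using G by (simp add: orth_carrier_vec)
    then show "z = 0\<^sub>v k"
      using inj_onD[OF inj] z_carrier by simp
  qed (use G in \<open>auto simp: orth_def\<close>)
  then show ?thesis
    using card_mult_card_orth[OF vec_subspace_mat_image[OF G]] by simp
qed

text \<open>Appending rows to a matrix of full row rank without raising the rank cannot shrink its kernel:
  the projection to the first block of coordinates is injective on the column space.\<close>
lemma ker_subset_ker_if_rank_append_le:
  fixes G M :: "'a mat"
  assumes G: "G \<in> carrier_mat k n" and M: "M \<in> carrier_mat r n"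
    and card_G: "card ((\<lambda>x. G *\<^sub>v x) ` carrier_vec n) = card (UNIV :: 'a set) ^ k"
    and rank: "mat_rank (G @\<^sub>r M) \<le> k"
    and x: "x \<in> carrier_vec n" "G *\<^sub>v x = 0\<^sub>v k"
  shows "M *\<^sub>v x = 0\<^sub>v r"
proof -
  let ?A = "G @\<^sub>r M" and ?first = "\<lambda>w. vec_first w k"
  have A: "?A \<in> carrier_mat (k + r) n"
    using G M by auto
  have split: "?A *\<^sub>v y = (G *\<^sub>v y) @\<^sub>v (M *\<^sub>v y)" if "y \<in> carrier_vec n" for y
    by (rule mat_mult_append[OF G M that])
  then have first: "?first (?A *\<^sub>v y) = G *\<^sub>v y" if "y \<in> carrier_vec n" for y
    using that G by (simp add: vec_first_append)
  have "card ((\<lambda>y. ?A *\<^sub>v y) ` carrier_vec n) \<le> card (UNIV :: 'a set) ^ k"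
    using card_mat_image_eq_power_rank[OF A] rank card_UNIV_gt_1 by (simp add: power_increasing)
  moreover have "?first ` (\<lambda>y. ?A *\<^sub>v y) ` carrier_vec n = (\<lambda>y. G *\<^sub>v y) ` carrier_vec n"
    using first by (force simp: image_image)
  ultimately have "inj_on ?first ((\<lambda>y. ?A *\<^sub>v y) ` carrier_vec n)"
    using card_G card_image_le[of "(\<lambda>y. ?A *\<^sub>v y) ` carrier_vec n" ?first]
    by (intro eq_card_imp_inj_on) auto
  moreover have "?first (?A *\<^sub>v x) = ?first (?A *\<^sub>v 0\<^sub>v n)"
    using first x G by simp
  ultimately have "?A *\<^sub>v x = ?A *\<^sub>v 0\<^sub>v n"
    using x by (auto dest: inj_onD)
  then show ?thesis
    using split x G M append_vec_eq[of "G *\<^sub>v x" k] by auto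
qed

lemma orth_subset_ker_if_rank_append_le:
  fixes C :: "'a vec set" and G M :: "'a mat"
  assumes gen: "is_gen_matrix n k C G" and card_C: "card C = card (UNIV :: 'a set) ^ k"
    and M: "M \<in> carrier_mat r n" and rank: "mat_rank (G @\<^sub>r M) \<le> k"
  shows "orth n C \<subseteq> {x \<in> carrier_vec n. M *\<^sub>v x = 0\<^sub>v r}"
proof -
  have G: "G \<in> carrier_mat k n" and C: "C = (\<lambda>y. transpose_mat G *\<^sub>v y) ` carrier_vec k"
    using gen by (auto simp: is_gen_matrix_def)
  have "inj_on (\<lambda>y. transpose_mat G *\<^sub>v y) (carrier_vec k)"
    using card_C C by (intro eq_card_imp_inj_on) (simp_all add: card_carrier_vec)
  then have card_G: "card ((\<lambda>x. G *\<^sub>v x) ` carrier_vec n) = card (UNIV :: 'a set) ^ k"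
    by (rule card_mat_image_if_transpose_inj[OF G])
  show ?thesis
  proof safe
    fix x assume x: "x \<in> orth n C"
    then have x_carrier: "x \<in> carrier_vec n"
      using orth_carrier by blast
    then have "G *\<^sub>v x = 0\<^sub>v k"
      using x mem_orth_transpose_image_iff[OF G] C by (simp add: orth_carrier_vec)
    then show "M *\<^sub>v x = 0\<^sub>v r"
      by (rule ker_subset_ker_if_rank_append_le[OF G M card_G rank x_carrier])
  qed (use orth_carrier in blast)
qed

end

section \<open>The Galois twist and the rank conditions\<close>

locale galois_twist = finite_field_char +
  fixes s :: nat
  assumes s_less_e: "s < e"
begin

text \<open>The twist \<open>\<sigma>\<close> of the paper; it turns the \<open>s\<close>-Galois form into the Euclidean one.\<close>
definition frob :: "'a \<Rightarrow> 'a" where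
  "frob x = x ^ p ^ (e - s)"

definition frob_inv :: "'a \<Rightarrow> 'a" where
  "frob_inv x = x ^ p ^ s"

abbreviation vfrob :: "'a vec \<Rightarrow> 'a vec" where
  "vfrob \<equiv> map_vec frob"

lemma frob_frob_inv [simp]: "frob (frob_inv x) = x" and frob_inv_frob [simp]: "frob_inv (frob x) = x"
proof -
  have "p ^ s * p ^ (e - s) = p ^ e"
    using s_less_e by (simp flip: power_add)
  then show "frob (frob_inv x) = x" "frob_inv (frob x) = x"
    using power_card_UNIV_eq_self[of x]
    by (simp_all add: frob_def frob_inv_def card_UNIV_eq flip: power_mult) (simp add: mult.commute)
qed

lemma frob_add [simp]: "frob (x + y) = frob x + frob y"
  unfolding frob_def by (rule power_p_power_add)

lemma frob_mult [simp]: "frob (x * y) = frob x * frob y"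
  by (simp add: frob_def power_mult_distrib)

lemma frob_sum: "frob (sum f A) = (\<Sum>i\<in>A. frob (f i))"
  unfolding frob_def by (rule power_p_power_sum)

lemma frob_eq_0_iff [simp]: "frob x = 0 \<longleftrightarrow> x = 0"
  using p_gt_1 by (simp add: frob_def)

lemma map_vec_frob_inv_vfrob [simp]: "map_vec frob_inv (vfrob x) = x"
  by (intro eq_vecI) auto

lemma inj_vfrob: "inj vfrob"
  by (metis injI map_vec_frob_inv_vfrob)

lemma frob_galois_form:
  assumes "c \<in> carrier_vec n" "x \<in> carrier_vec n"
  shows "frob (galois_form p s c x) = vfrob c \<bullet> x"
proof -
  have "frob (galois_form p s c x) = (\<Sum>i<n. frob (c $ i) * x $ i)"
    unfolding galois_form_def using assms by (simp add: frob_sum flip: frob_inv_def)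
  also have "\<dots> = vfrob c \<bullet> x"
    unfolding scalar_prod_def using assms by (intro sum.cong) auto
  finally show ?thesis .
qed

lemma galois_dual_eq_orth:
  assumes "C \<subseteq> carrier_vec n"
  shows "galois_dual p s n C = orth n (vfrob ` C)"
proof -
  have "galois_form p s c x = 0 \<longleftrightarrow> vfrob c \<bullet> x = 0" if "c \<in> C" "x \<in> carrier_vec n" for c x
    using frob_galois_form[OF subsetD[OF assms that(1)] that(2)] frob_eq_0_iff by metis
  then show ?thesis
    by (auto simp: galois_dual_def orth_def)
qed

lemma vec_subspace_vfrob_image:
  assumes C: "vec_subspace n C"
  shows "vec_subspace n (vfrob ` C)"
proof (rule vec_subspaceI)
  show "vfrob ` C \<subseteq> carrier_vec n" "0\<^sub>v n \<in> vfrob ` C"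
    using vec_subspace_carrier[OF C] vec_subspace_zero[OF C] by (auto intro!: image_eqI[of _ _ "0\<^sub>v n"])
  have "vfrob x + vfrob y = vfrob (x + y)" if "x \<in> C" "y \<in> C" for x y
  proof -
    have "x \<in> carrier_vec n" "y \<in> carrier_vec n"
      using that vec_subspace_carrier[OF C] by auto
    then show ?thesis
      by (intro eq_vecI) auto
  qed
  then show "u + v \<in> vfrob ` C" if "u \<in> vfrob ` C" "v \<in> vfrob ` C" for u v
    using that vec_subspace_add[OF C] by auto
  have "c \<cdot>\<^sub>v vfrob x = vfrob (frob_inv c \<cdot>\<^sub>v x)" for c x
    by (intro eq_vecI) auto
  then show "c \<cdot>\<^sub>v u \<in> vfrob ` C" if "u \<in> vfrob ` C" for c u
    using that vec_subspace_smult[OF C] by auto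
qed

lemma vfrob_zero [simp]: "vfrob (0\<^sub>v n) = 0\<^sub>v n"
  by (intro eq_vecI) auto

lemma hweight_vfrob: "hweight (vfrob x) = hweight x"
proof -
  have "{i. i < dim_vec x \<and> vfrob x $ i \<noteq> 0} = {i. i < dim_vec x \<and> x $ i \<noteq> 0}"
    by auto
  then show ?thesis
    by (simp add: hweight_def)
qed

lemma mat_epow_mult_vec:
  assumes H: "H \<in> carrier_mat r n" and x: "x \<in> carrier_vec n"
  shows "mat_epow H (p ^ (e - s)) *\<^sub>v x = vfrob (H *\<^sub>v map_vec frob_inv x)"
  using H x by (intro eq_vecI) (simp_all add: mat_epow_def scalar_prod_def row_def frob_sum
      flip: frob_def)

lemma ker_mat_epow_subset:
  assumes "is_pc_matrix n k C H"
  shows "{x \<in> carrier_vec n. mat_epow H (p ^ (e - s)) *\<^sub>v x = 0\<^sub>v (n - k)} \<subseteq> vfrob ` C"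
proof safe
  fix x assume x: "x \<in> carrier_vec n" and "mat_epow H (p ^ (e - s)) *\<^sub>v x = 0\<^sub>v (n - k)"
  moreover have H: "H \<in> carrier_mat (n - k) n"
    using assms by (simp add: is_pc_matrix_def)
  ultimately have "vfrob (H *\<^sub>v map_vec frob_inv x) = vfrob (0\<^sub>v (n - k))"
    by (simp add: mat_epow_mult_vec)
  then have "H *\<^sub>v map_vec frob_inv x = 0\<^sub>v (n - k)"
    by (rule injD[OF inj_vfrob])
  then have "map_vec frob_inv x \<in> C"
    using assms x by (simp add: is_pc_matrix_def)
  moreover have "x = vfrob (map_vec frob_inv x)"
    by (intro eq_vecI) auto
  ultimately show "x \<in> vfrob ` C"
    by blast
qed

lemma galois_dual_subset_if_rank_condition:
  fixes C1 C2 :: "'a vec set" and G1 H2 :: "'a mat"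
  assumes L1: "lin_code n k1 d1 C1" and L2: "lin_code n k2 d2 C2"
    and G1: "is_gen_matrix n k1 C1 G1" and H2: "is_pc_matrix n k2 C2 H2"
    and rank_condition: "mat_rank (G1 @\<^sub>r mat_epow H2 (p ^ (e - s))) \<le> k1
      \<or> k1 - fdim n (C1 \<inter> galois_dual p s n C2) \<le> k1 + k2 - n"
    and "n \<le> k1 + k2"
  shows "galois_dual p s n C2 \<subseteq> C1"
  using rank_condition
proof
  assume "mat_rank (G1 @\<^sub>r mat_epow H2 (p ^ (e - s))) \<le> k1"
  then have "orth n C1 \<subseteq> {x \<in> carrier_vec n. mat_epow H2 (p ^ (e - s)) *\<^sub>v x = 0\<^sub>v (n - k2)}"
    using H2 by (intro orth_subset_ker_if_rank_append_le[OF G1 lin_code_card[OF L1]])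
      (auto simp: is_pc_matrix_def mat_epow_def)
  then have "orth n C1 \<subseteq> vfrob ` C2"
    using ker_mat_epow_subset[OF H2] by blast
  then have "orth n (vfrob ` C2) \<subseteq> orth n (orth n C1)"
    by (rule orth_antimono)
  then show ?thesis
    using galois_dual_eq_orth vec_subspace_carrier lin_code_vec_subspace L1 L2 orth_orth by metis
next
  let ?S = "galois_dual p s n C2"
  assume "k1 - fdim n (C1 \<inter> ?S) \<le> k1 + k2 - n"
  then have "n - k2 \<le> fdim n (C1 \<inter> ?S)"
    using \<open>n \<le> k1 + k2\<close> by linarith
  have K: "vec_subspace n (vfrob ` C2)"
    using vec_subspace_vfrob_image lin_code_vec_subspace[OF L2] .
  have S_eq: "?S = orth n (vfrob ` C2)"
    using galois_dual_eq_orth vec_subspace_carrier lin_code_vec_subspace[OF L2] by blast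
  have "card (vfrob ` C2) * card ?S = card (UNIV :: 'a set) ^ (n - k2) * card (UNIV :: 'a set) ^ k2"
    using card_mult_card_orth[OF K] lin_code_dim_le[OF L2] S_eq
    by (simp add: card_image[OF inj_on_subset[OF inj_vfrob]] lin_code_card[OF L2] flip: power_add)
  then have card_S: "card ?S = card (UNIV :: 'a set) ^ (n - k2)"
    using lin_code_card[OF L2] card_UNIV_gt_1 card_image[OF inj_on_subset[OF inj_vfrob]]
    by (simp add: mult.commute)
  have S: "vec_subspace n ?S"
    using S_eq vec_subspace_orth vec_subspace_carrier[OF K] by metis
  have C1_S: "vec_subspace n (C1 \<inter> ?S)"
    using lin_code_vec_subspace[OF L1] S by (auto intro: vec_subspaceI dest: vec_subspace_carrier
        vec_subspace_zero vec_subspace_add vec_subspace_smult)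
  have "card ?S \<le> card (C1 \<inter> ?S)"
    using card_eq_power_fdim[of n "C1 \<inter> ?S"] is_fsubspace_iff_vec_subspace[of n "C1 \<inter> ?S"] C1_S
      \<open>n - k2 \<le> fdim n (C1 \<inter> ?S)\<close> card_UNIV_gt_1 card_S by (simp add: power_increasing)
  then have "C1 \<inter> ?S = ?S"
    using vec_subspace_finite[OF S] by (intro card_seteq) auto
  then show ?thesis
    by blast
qed

end

theorem theorem2p6:
  fixes C1 C2 :: "'a::{finite,field} vec set"
    and G1 G2 H1 H2 :: "'a mat"
    and p e s n k1 k2 d1 d2 :: nat
  assumes "prime p" and "CHAR('a) = p" and "card (UNIV :: 'a set) = p ^ e" and "1 \<le> e" and "s < e"
    and "lin_code n k1 d1 C1" and "lin_code n k2 d2 C2"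
    and "is_gen_matrix n k1 C1 G1" and "is_pc_matrix n k1 C1 H1"
    and "is_gen_matrix n k2 C2 G2" and "is_pc_matrix n k2 C2 H2"
    and "n \<le> k1 + k2"
    and "mat_rank (G1 @\<^sub>r mat_epow H2 (p ^ (e - s))) \<le> k1
         \<or> (mat_rank (G1 * transpose_mat (mat_epow G2 (p ^ (e - s))))
              = k1 - fdim n (C1 \<inter> galois_dual p s n C2)
            \<and> k1 - fdim n (C1 \<inter> galois_dual p s n C2) \<le> k1 + k2 - n)"
  shows "\<exists>(Q :: ('a vec \<Rightarrow> complex) set) d.
           quantum_code p e n (k1 + k2 - n) d Q \<and> min d1 d2 \<le> d"
proof -
  interpret galois_twist p e "TYPE('a)" s
    by unfold_locales (use assms(1-5) in auto)
  let ?K = "vfrob ` C2"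
  have C2: "vec_subspace n C2"
    by (rule lin_code_vec_subspace[OF assms(7)])
  have "galois_dual p s n C2 \<subseteq> C1"
    using assms(13) by (intro galois_dual_subset_if_rank_condition[OF assms(6,7,8,11) _ assms(12)]) auto
  then have "orth n ?K \<subseteq> C1"
    using galois_dual_eq_orth[OF vec_subspace_carrier[OF C2]] by simp
  moreover have "card ?K = card (UNIV :: 'a set) ^ k2"
    using lin_code_card[OF assms(7)] card_image[OF inj_on_subset[OF inj_vfrob]] by simp
  moreover have "\<forall>c\<in>?K. c \<noteq> 0\<^sub>v n \<longrightarrow> d2 \<le> hweight c"
    using lin_code_weight[OF assms(7)] by (auto simp: hweight_vfrob)
  ultimately have "quantum_code p e n (k1 + k2 - n) (min d1 d2) (coset_states C1 (orth n ?K))"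
    using css_quantum_code[OF lin_code_vec_subspace[OF assms(6)] lin_code_card[OF assms(6)]
        lin_code_weight[OF assms(6)] vec_subspace_vfrob_image[OF C2]] assms(12) by blast
  then show ?thesis
    by blast
qed

end
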